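(* Let $\rho,\sigma$ be commuting quantum states on a finite-dimensional Hilbert space and $\rho',\sigma'$ commuting quantum states on a (possibly different) finite-dimensional Hilbert space, with $\sigma,\sigma'$ both full-rank. If $(\rho,\sigma)\succ(\rho',\sigma')$, then $M_{s_{\min}}(\rho'\|\sigma')\ge M_{s_{\min}}(\rho\|\sigma)$, where $$M_x(\rho\|\sigma):=V(\rho\|\sigma)+\left(\frac{1}{\ln 2}-\log(x)-S(\rho\|\sigma)\right)^2$$ and $s_{\min}$ denotes the smallest eigenvalue of $\sigma$.
   Context: Logs are base 2 unless written $\ln$. $S(\rho\|\sigma)=\mathrm{Tr}(\rho(\log\rho-\log\sigma))$, $V(\rho\|\sigma)=\mathrm{Tr}(\rho(\log\rho-\log\sigma)^2)-S(\rho\|\sigma)^2$. $(\rho,\sigma)\succ(\rho',\sigma')$ means there is a quantum channel $\mathcal E$ with $\mathcal E(\rho)=\rho'$ and $\mathcal E(\sigma)=\sigma'$. *)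

theory Defs
  imports Complex_Main "Jordan_Normal_Form.Spectral_Radius" "Jordan_Normal_Form.Schur_Decomposition"
begin

definition mtrace :: "complex mat \<Rightarrow> complex" where
  "mtrace A = (\<Sum>i<dim_row A. A $$ (i, i))"

definition hermitian_mat :: "nat \<Rightarrow> complex mat \<Rightarrow> bool" where
  "hermitian_mat n A \<longleftrightarrow> A \<in> carrier_mat n n \<and> mat_adjoint A = A"

definition psd_mat :: "nat \<Rightarrow> complex mat \<Rightarrow> bool" where
  "psd_mat n A \<longleftrightarrow> hermitian_mat n A \<and>
     (\<forall>v \<in> carrier_vec n. Re ((A *\<^sub>v v) \<bullet>c v) \<ge> 0)"

definition density_mat :: "nat \<Rightarrow> complex mat \<Rightarrow> bool" where
  "density_mat n \<rho> \<longleftrightarrow> psd_mat n \<rho> \<and> mtrace \<rho> = 1"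

definition unitary_mat :: "nat \<Rightarrow> complex mat \<Rightarrow> bool" where
  "unitary_mat n U \<longleftrightarrow> U \<in> carrier_mat n n \<and> U * mat_adjoint U = 1\<^sub>m n"

definition full_rank_mat :: "complex mat \<Rightarrow> bool" where
  "full_rank_mat A \<longleftrightarrow> 0 \<notin> spectrum A"

definition mat_block :: "nat \<Rightarrow> complex mat \<Rightarrow> nat \<Rightarrow> nat \<Rightarrow> complex mat" where
  "mat_block n M a b = mat n n (\<lambda>(r, s). M $$ (a * n + r, b * n + s))"

text \<open>(id_k \<otimes> E)(M): apply E blockwise to a (k*n) x (k*n) matrix, output of size (k*m) x (k*m)\<close>
definition ampliate :: "nat \<Rightarrow> nat \<Rightarrow> nat \<Rightarrow> (complex mat \<Rightarrow> complex mat) \<Rightarrow> complex mat \<Rightarrow> complex mat" where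
  "ampliate n m k E M = mat (k * m) (k * m)
     (\<lambda>(i, j). E (mat_block n M (i div m) (j div m)) $$ (i mod m, j mod m))"

definition quantum_channel :: "nat \<Rightarrow> nat \<Rightarrow> (complex mat \<Rightarrow> complex mat) \<Rightarrow> bool" where
  "quantum_channel n m E \<longleftrightarrow>
     (\<forall>X \<in> carrier_mat n n. E X \<in> carrier_mat m m) \<and>
     (\<forall>X \<in> carrier_mat n n. \<forall>Y \<in> carrier_mat n n. \<forall>a b :: complex.
          E (a \<cdot>\<^sub>m X + b \<cdot>\<^sub>m Y) = a \<cdot>\<^sub>m E X + b \<cdot>\<^sub>m E Y) \<and>
     (\<forall>X \<in> carrier_mat n n. mtrace (E X) = mtrace X) \<and>
     (\<forall>k M. psd_mat (k * n) M \<longrightarrow> psd_mat (k * m) (ampliate n m k E M))"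

definition majorizes_pair ::
  "nat \<Rightarrow> complex mat \<Rightarrow> complex mat \<Rightarrow> nat \<Rightarrow> complex mat \<Rightarrow> complex mat \<Rightarrow> bool" where
  "majorizes_pair n \<rho> \<sigma> m \<rho>' \<sigma>' \<longleftrightarrow>
     (\<exists>E. quantum_channel n m E \<and> E \<rho> = \<rho>' \<and> E \<sigma> = \<sigma>')"

text \<open>f(A) = U diag(f(\<lambda>_i)) U^* for a spectral decomposition A = U diag(\<lambda>_i) U^*
  (independent of the chosen decomposition)\<close>
definition mat_fun :: "(real \<Rightarrow> real) \<Rightarrow> nat \<Rightarrow> complex mat \<Rightarrow> complex mat" where
  "mat_fun f n A = (SOME B. \<exists>U d. unitary_mat n U \<and>
       A = U * mat_diag n (\<lambda>i. complex_of_real (d i)) * mat_adjoint U \<and>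
       B = U * mat_diag n (\<lambda>i. complex_of_real (f (d i))) * mat_adjoint U)"

text \<open>base-2 logarithm, with the convention log 0 := 0 on the kernel (so 0 log 0 = 0)\<close>
definition log2' :: "real \<Rightarrow> real" where
  "log2' x = (if x > 0 then log 2 x else 0)"

definition mat_log :: "nat \<Rightarrow> complex mat \<Rightarrow> complex mat" where
  "mat_log n A = mat_fun log2' n A"

definition rel_entropy :: "nat \<Rightarrow> complex mat \<Rightarrow> complex mat \<Rightarrow> real" where
  "rel_entropy n \<rho> \<sigma> = Re (mtrace (\<rho> * (mat_log n \<rho> - mat_log n \<sigma>)))"

definition rel_variance :: "nat \<Rightarrow> complex mat \<Rightarrow> complex mat \<Rightarrow> real" where
  "rel_variance n \<rho> \<sigma> =
     Re (mtrace (\<rho> * ((mat_log n \<rho> - mat_log n \<sigma>) * (mat_log n \<rho> - mat_log n \<sigma>))))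
     - (rel_entropy n \<rho> \<sigma>)\<^sup>2"

definition M_quantity :: "real \<Rightarrow> nat \<Rightarrow> complex mat \<Rightarrow> complex mat \<Rightarrow> real" where
  "M_quantity x n \<rho> \<sigma> =
     rel_variance n \<rho> \<sigma> + (1 / ln 2 - log 2 x - rel_entropy n \<rho> \<sigma>)\<^sup>2"

definition min_eigenvalue :: "complex mat \<Rightarrow> real" where
  "min_eigenvalue A = Min (Re ` spectrum A)"

end

theory Submission
  imports Defs
begin

text \<open>Commuting states are diagonal in a common orthonormal basis, so \<open>M\<^sub>x(\<rho>\<parallel>\<sigma>)\<close> is the
  classical quantity \<open>\<Sum>\<^sub>i p\<^sub>i (log (p\<^sub>i / q\<^sub>i) - c)\<^sup>2\<close>, \<open>c = 1 / ln 2 - log x\<close>, of the eigenvalue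
  distributions. In the eigenbases \<open>u\<^sub>i\<close> of \<open>(\<rho>, \<sigma>)\<close> and \<open>v\<^sub>j\<close> of \<open>(\<rho>', \<sigma>')\<close> a channel \<open>E\<close>
  acts on eigenvalues by the column-stochastic matrix \<open>W\<^sub>j\<^sub>i = \<langle>v\<^sub>j, E(|u\<^sub>i\<rangle>\<langle>u\<^sub>i|) v\<^sub>j\<rangle>\<close>.
  Each summand equals \<open>q\<^sub>i h(x p\<^sub>i / q\<^sub>i) / (x ln\<^sup>2 2)\<close> with \<open>h(r) = r (ln r - 1)\<^sup>2\<close>, which is
  concave on \<open>[0, 1]\<close>; for \<open>x = s\<^sub>m\<^sub>i\<^sub>n\<close> we have \<open>x p\<^sub>i \<le> q\<^sub>i\<close>, so all arguments lie in \<open>[0, 1]\<close>,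
  and Jensen's inequality for the perspective of \<open>h\<close> shows that the sum can only grow under \<open>W\<close>.\<close>

lemma adjoint_carrier [simp]: "U \<in> carrier_mat n m \<Longrightarrow> mat_adjoint U \<in> carrier_mat m n"
  unfolding mat_adjoint_def by (auto simp: mat_of_rows_def)

lemma adjoint_dim [simp]:
  "dim_row (mat_adjoint U) = dim_col U" "dim_col (mat_adjoint U) = dim_row U"
  unfolding mat_adjoint_def by (auto simp: mat_of_rows_def)

lemma adjoint_index [simp]:
  "i < dim_col U \<Longrightarrow> j < dim_row U \<Longrightarrow> mat_adjoint U $$ (i, j) = cnj (U $$ (j, i))"
  unfolding mat_adjoint_def by (auto simp: mat_of_rows_def)

lemma mult_carrier_square [simp]:
  "A \<in> carrier_mat n n \<Longrightarrow> B \<in> carrier_mat n n \<Longrightarrow> A * B \<in> carrier_mat n n"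
  by (rule mult_carrier_mat)

lemma adjoint_adjoint [simp]: "mat_adjoint (mat_adjoint A) = (A :: complex mat)"
  by (rule eq_matI) auto

lemma adjoint_mult:
  fixes A B :: "complex mat"
  assumes "A \<in> carrier_mat n k" and "B \<in> carrier_mat k m"
  shows "mat_adjoint (A * B) = mat_adjoint B * mat_adjoint A"
  using assms by (intro eq_matI) (auto simp: scalar_prod_def ac_simps intro!: sum.cong)

lemma mult_adjoint_index:
  fixes A :: "complex mat"
  assumes "i < dim_row A" and "j < dim_row A"
  shows "(A * mat_adjoint A) $$ (i, j) = (\<Sum>l<dim_col A. A $$ (i, l) * cnj (A $$ (j, l)))"
  using assms by (auto simp: scalar_prod_def lessThan_atLeast0 intro!: sum.cong)

lemma adjoint_mult_index:
  fixes A :: "complex mat"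
  assumes "i < dim_col A" and "j < dim_col A"
  shows "(mat_adjoint A * A) $$ (i, j) = (\<Sum>l<dim_row A. cnj (A $$ (l, i)) * A $$ (l, j))"
  using assms by (auto simp: scalar_prod_def lessThan_atLeast0 intro!: sum.cong)

lemma unitary_carrier: "unitary_mat n U \<Longrightarrow> U \<in> carrier_mat n n"
  unfolding unitary_mat_def by auto

lemma unitary_adjoint_mult: "unitary_mat n U \<Longrightarrow> mat_adjoint U * U = 1\<^sub>m n"
  unfolding unitary_mat_def by (auto intro: mat_mult_left_right_inverse)

lemma unitary_rows:
  assumes "unitary_mat n U" and "i < n" and "j < n"
  shows "(\<Sum>l<n. U $$ (i, l) * cnj (U $$ (j, l))) = of_bool (i = j)"
  using mult_adjoint_index[of i U j] assms unfolding unitary_mat_def by auto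

lemma unitary_cols:
  assumes "unitary_mat n U" and "i < n" and "j < n"
  shows "(\<Sum>l<n. cnj (U $$ (l, i)) * U $$ (l, j)) = of_bool (i = j)"
  using adjoint_mult_index[of i U j] unitary_adjoint_mult[OF assms(1)] unitary_carrier[OF assms(1)] assms
  by auto

lemma unitary_cancel_left:
  "unitary_mat n U \<Longrightarrow> X \<in> carrier_mat n k \<Longrightarrow> mat_adjoint U * (U * X) = X"
  by (subst assoc_mult_mat[symmetric, of _ n n _ n _ k])
    (auto simp: unitary_carrier unitary_adjoint_mult)

lemma unitary_cancel_right:
  "unitary_mat n U \<Longrightarrow> X \<in> carrier_mat n k \<Longrightarrow> U * (mat_adjoint U * X) = X"
  by (subst assoc_mult_mat[symmetric, of _ n n _ n _ k])
    (auto simp: unitary_carrier unitary_mat_def)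

lemma unitary_mult:
  assumes U: "unitary_mat n U" and V: "unitary_mat n V"
  shows "unitary_mat n (U * V)"
proof -
  have [simp]: "U \<in> carrier_mat n n" "V \<in> carrier_mat n n"
    using U V by (auto simp: unitary_carrier)
  have "U * V * mat_adjoint (U * V) = U * (V * (mat_adjoint V * mat_adjoint U))"
    by (simp add: adjoint_mult[of _ n n _ n] assoc_mult_mat[of U n n V n _ n])
  also have "\<dots> = 1\<^sub>m n"
    using U by (simp add: unitary_cancel_right[OF V, of _ n] unitary_mat_def)
  finally show ?thesis
    unfolding unitary_mat_def by auto
qed

definition unitary_diag :: "nat \<Rightarrow> complex mat \<Rightarrow> (nat \<Rightarrow> complex) \<Rightarrow> complex mat" where
  "unitary_diag n U d = U * mat_diag n d * mat_adjoint U"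

lemma unitary_diag_carrier [simp]: "U \<in> carrier_mat n n \<Longrightarrow> unitary_diag n U d \<in> carrier_mat n n"
  unfolding unitary_diag_def by auto

lemma unitary_diag_dim [simp]:
  "U \<in> carrier_mat n n \<Longrightarrow> dim_row (unitary_diag n U d) = n"
  "U \<in> carrier_mat n n \<Longrightarrow> dim_col (unitary_diag n U d) = n"
  unfolding unitary_diag_def by auto

lemma unitary_diag_index:
  assumes U: "U \<in> carrier_mat n n" and "i < n" and "j < n"
  shows "unitary_diag n U d $$ (i, j) = (\<Sum>l<n. U $$ (i, l) * d l * cnj (U $$ (j, l)))"
  using assms unfolding unitary_diag_def mat_diag_mult_right[OF U]
  by (auto simp: scalar_prod_def lessThan_atLeast0 intro!: sum.cong)

lemma unitary_diag_add:
  assumes "U \<in> carrier_mat n n"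
  shows "unitary_diag n U d + unitary_diag n U e = unitary_diag n U (\<lambda>i. d i + e i)"
  using assms by (intro eq_matI) (auto simp: unitary_diag_index ring_distribs sum.distrib)

lemma unitary_diag_diff:
  assumes "U \<in> carrier_mat n n"
  shows "unitary_diag n U d - unitary_diag n U e = unitary_diag n U (\<lambda>i. d i - e i)"
  using assms by (intro eq_matI) (auto simp: unitary_diag_index ring_distribs sum_subtractf)

lemma unitary_diag_smult:
  assumes "U \<in> carrier_mat n n"
  shows "c \<cdot>\<^sub>m unitary_diag n U d = unitary_diag n U (\<lambda>i. c * d i)"
  using assms by (intro eq_matI) (auto simp: unitary_diag_index sum_distrib_left mult_ac)

lemma adjoint_unitary_diag:
  assumes "U \<in> carrier_mat n n"
  shows "mat_adjoint (unitary_diag n U d) = unitary_diag n U (\<lambda>i. cnj (d i))"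
  using assms by (intro eq_matI) (auto simp: unitary_diag_index cnj_sum mult_ac)

lemma unitary_diag_mult:
  assumes U: "unitary_mat n U"
  shows "unitary_diag n U d * unitary_diag n U e = unitary_diag n U (\<lambda>i. d i * e i)"
proof -
  have Uc: "U \<in> carrier_mat n n"
    using U by (rule unitary_carrier)
  have "unitary_diag n U d * unitary_diag n U e
      = U * (mat_diag n d * (mat_adjoint U * (U * (mat_diag n e * mat_adjoint U))))"
    unfolding unitary_diag_def using Uc by (simp add: assoc_mult_mat[of _ n n _ n _ n])
  also have "\<dots> = U * (mat_diag n (\<lambda>i. d i * e i) * mat_adjoint U)"
  proof -
    have "mat_diag n d * (mat_diag n e * mat_adjoint U) = mat_diag n d * mat_diag n e * mat_adjoint U"
      using Uc by (simp only: assoc_mult_mat[of _ n n _ n _ n] mat_diag_dim adjoint_carrier)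
    then show ?thesis
      using Uc by (simp add: unitary_cancel_left[OF U, of _ n])
  qed
  finally show ?thesis
    unfolding unitary_diag_def using Uc by (simp add: assoc_mult_mat[of _ n n _ n _ n])
qed

lemma unitary_diag_conj:
  assumes "W \<in> carrier_mat n n" and "V \<in> carrier_mat n n"
  shows "W * unitary_diag n V d * mat_adjoint W = unitary_diag n (W * V) d"
  using assms unfolding unitary_diag_def
  by (simp add: adjoint_mult[of W n n V n] assoc_mult_mat[of _ n n _ n _ n])

lemma trace_unitary_diag:
  assumes U: "unitary_mat n U"
  shows "mtrace (unitary_diag n U d) = (\<Sum>i<n. d i)"
proof -
  have "mtrace (unitary_diag n U d) = (\<Sum>i<n. \<Sum>l<n. U $$ (i, l) * d l * cnj (U $$ (i, l)))"
    unfolding mtrace_def using unitary_carrier[OF U] by (simp add: unitary_diag_index)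
  also have "\<dots> = (\<Sum>l<n. d l * (\<Sum>i<n. cnj (U $$ (i, l)) * U $$ (i, l)))"
    by (subst sum.swap) (simp add: sum_distrib_left mult_ac)
  also have "\<dots> = (\<Sum>l<n. d l)"
    by (simp add: unitary_cols[OF U])
  finally show ?thesis .
qed

lemma spectrum_unitary_diag:
  assumes U: "unitary_mat n U"
  shows "spectrum (unitary_diag n U d) = d ` {..<n}"
proof -
  have Uc: "U \<in> carrier_mat n n"
    using U by (rule unitary_carrier)
  have "similar_mat_wit (unitary_diag n U d) (mat_diag n d) U (mat_adjoint U)"
    using Uc U unitary_adjoint_mult[OF U]
    unfolding similar_mat_wit_def Let_def unitary_diag_def unitary_mat_def by auto
  then have "char_poly (unitary_diag n U d) = char_poly (mat_diag n d)"
    by (intro char_poly_similar) (auto simp: similar_mat_def)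
  also have "\<dots> = (\<Prod>a\<leftarrow>diag_mat (mat_diag n d). [:- a, 1:])"
    by (rule char_poly_upper_triangular[OF mat_diag_dim]) (auto simp: upper_triangular_def mat_diag_def)
  finally have "char_poly (unitary_diag n U d) = (\<Prod>a\<leftarrow>diag_mat (mat_diag n d). [:- a, 1:])" .
  moreover have "diag_mat (mat_diag n d) = map d [0..<n]"
    unfolding diag_mat_def mat_diag_def by auto
  ultimately show ?thesis
    unfolding spectrum_root_char_poly[OF unitary_diag_carrier[OF Uc]]
    by (auto simp: poly_prod_list o_def prod_list_zero_iff)
qed

section \<open>The spectral theorem for normal matrices\<close>

definition cvec_norm :: "complex vec \<Rightarrow> real" where
  "cvec_norm v = sqrt (\<Sum>i<dim_vec v. (cmod (v $ i))\<^sup>2)"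

lemma cscalar_prod_self: "v \<bullet>c v = of_real ((cvec_norm v)\<^sup>2)"
proof -
  have "v \<bullet>c v = (\<Sum>i<dim_vec v. of_real ((cmod (v $ i))\<^sup>2))"
    unfolding scalar_prod_def lessThan_atLeast0
    by (intro sum.cong) (auto simp add: complex_norm_square simp del: of_real_power)
  then show ?thesis
    unfolding cvec_norm_def by (simp add: sum_nonneg)
qed

lemma cvec_norm_pos:
  assumes "v \<bullet>c v \<noteq> 0"
  shows "cvec_norm v > 0"
proof -
  have "cvec_norm v \<ge> 0"
    unfolding cvec_norm_def by (simp add: sum_nonneg)
  moreover have "cvec_norm v \<noteq> 0"
    using assms cscalar_prod_self[of v] by auto
  ultimately show ?thesis
    by linarith
qed

lemma unitary_normalized_cols:
  assumes ws: "set ws \<subseteq> carrier_vec n" "corthogonal ws" "length ws = n"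
  shows "unitary_mat n (mat n n (\<lambda>(i, j). ws ! j $ i / of_real (cvec_norm (ws ! j))))"
    (is "unitary_mat n ?W")
proof -
  have wsc: "ws ! j \<in> carrier_vec n" if "j < n" for j
    using ws that by auto
  have pos: "cvec_norm (ws ! j) > 0" if "j < n" for j
    using corthogonalD[OF ws(2)] that ws(3) by (intro cvec_norm_pos) auto
  have "(\<Sum>l<n. cnj (?W $$ (l, i)) * ?W $$ (l, j)) = of_bool (i = j)" if ij: "i < n" "j < n" for i j
  proof -
    have "(\<Sum>l<n. cnj (?W $$ (l, i)) * ?W $$ (l, j))
        = (ws ! j \<bullet>c ws ! i) / (of_real (cvec_norm (ws ! i)) * of_real (cvec_norm (ws ! j)))"
      using ij wsc[OF ij(1)] wsc[OF ij(2)]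
      by (auto simp: scalar_prod_def lessThan_atLeast0 sum_divide_distrib intro!: sum.cong)
    also have "\<dots> = of_bool (i = j)"
      using corthogonalD[OF ws(2), of j i] ij ws(3) pos[OF ij(1)] pos[OF ij(2)]
      by (auto simp: cscalar_prod_self power2_eq_square)
    finally show ?thesis .
  qed
  then have "mat_adjoint ?W * ?W = 1\<^sub>m n"
    by (intro eq_matI) (auto simp: adjoint_mult_index simp del: index_mult_mat(1))
  then show ?thesis
    unfolding unitary_mat_def by (auto intro: mat_mult_left_right_inverse)
qed

lemma unitary_completion:
  assumes v: "v \<in> carrier_vec n" and v0: "v \<noteq> 0\<^sub>v n"
  shows "\<exists>W c. unitary_mat n W \<and> col W 0 = c \<cdot>\<^sub>v v"
proof -
  interpret cof_vec_space n "TYPE(complex)" .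
  define b where "b = basis_completion v"
  define ws where "ws = gram_schmidt n b"
  from basis_completion[OF v v0, folded b_def]
  have b: "distinct b" "\<not> lin_dep (set b)" "set b \<subseteq> carrier_vec n" "hd b = v" "length b = n"
    by auto
  have n: "n > 0"
    using v v0 by (cases n) auto
  then obtain vs where bv: "b = v # vs"
    using b by (cases b) auto
  from gram_schmidt_result[OF b(3,1,2) refl, folded ws_def]
  have ws: "set ws \<subseteq> carrier_vec n" "corthogonal ws" "length ws = n"
    by (auto simp: b(5))
  have "ws ! 0 = v"
    using gram_schmidt_hd[OF v, of vs] ws(3) n unfolding ws_def bv by (cases "gram_schmidt n (v # vs)") auto
  then have "col (mat n n (\<lambda>(i, j). ws ! j $ i / of_real (cvec_norm (ws ! j)))) 0
      = (1 / of_real (cvec_norm v)) \<cdot>\<^sub>v v"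
    using n v by (intro eq_vecI) auto
  then show ?thesis
    using unitary_normalized_cols[OF ws] by blast
qed

lemma unitary_conj_eigenvector_col:
  assumes N: "N \<in> carrier_mat n n" and W: "unitary_mat n W" and v: "v \<in> carrier_vec n"
    and Wv: "col W 0 = c \<cdot>\<^sub>v v" and ev: "N *\<^sub>v v = e \<cdot>\<^sub>v v" and i: "i < n"
  shows "(mat_adjoint W * (N * W)) $$ (i, 0) = (if i = 0 then e else 0)"
proof -
  have Wc: "W \<in> carrier_mat n n"
    using W by (rule unitary_carrier)
  have n: "0 < n"
    using i by simp
  have "col (N * W) 0 = N *\<^sub>v col W 0"
    by (rule col_mult2[OF N Wc n])
  also have "\<dots> = e \<cdot>\<^sub>v col W 0"
    unfolding Wv using N v ev by (auto simp: mult_mat_vec intro!: eq_vecI)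
  finally have "(mat_adjoint W * (N * W)) $$ (i, 0) = e * (mat_adjoint W * W) $$ (i, 0)"
    using i n N Wc by (simp add: scalar_prod_smult_distrib[of _ n])
  then show ?thesis
    using i unitary_adjoint_mult[OF W] by simp
qed

lemma normal_unitary_conj:
  assumes N: "N \<in> carrier_mat n n" and normal: "N * mat_adjoint N = mat_adjoint N * N"
    and W: "unitary_mat n W"
  defines "A \<equiv> mat_adjoint W * (N * W)"
  shows "A * mat_adjoint A = mat_adjoint A * A"
proof -
  have Wc: "W \<in> carrier_mat n n"
    using W by (rule unitary_carrier)
  have WW: "W * mat_adjoint W = 1\<^sub>m n"
    using W unfolding unitary_mat_def by simp
  have adjA: "mat_adjoint A = mat_adjoint W * (mat_adjoint N * W)"
    unfolding A_def using Wc N by (simp add: adjoint_mult[of _ n n _ n] assoc_mult_mat[of _ n n _ n _ n])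
  have "A * mat_adjoint A = mat_adjoint W * (N * (W * mat_adjoint W) * (mat_adjoint N * W))"
    unfolding adjA unfolding A_def using Wc N by (simp add: assoc_mult_mat[of _ n n _ n _ n])
  also have "\<dots> = mat_adjoint W * (N * mat_adjoint N * W)"
    unfolding WW using Wc N by (simp add: assoc_mult_mat[of _ n n _ n _ n])
  also have "\<dots> = mat_adjoint W * (mat_adjoint N * N * W)"
    by (simp only: normal)
  also have "\<dots> = mat_adjoint W * (mat_adjoint N * (W * mat_adjoint W) * (N * W))"
    unfolding WW using Wc N by (simp add: assoc_mult_mat[of _ n n _ n _ n])
  also have "\<dots> = mat_adjoint A * A"
    unfolding adjA unfolding A_def using Wc N by (simp add: assoc_mult_mat[of _ n n _ n _ n])
  finally show ?thesis .
qed

text \<open>For a normal matrix the first row and the first column have the same norm, being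
  the first diagonal entries of \<open>A A\<^sup>*\<close> and \<open>A\<^sup>* A\<close>.\<close>

lemma normal_first_row_zero:
  fixes A :: "complex mat"
  assumes A: "A \<in> carrier_mat (Suc k) (Suc k)" and normal: "A * mat_adjoint A = mat_adjoint A * A"
    and col0: "\<And>i. 0 < i \<Longrightarrow> i < Suc k \<Longrightarrow> A $$ (i, 0) = 0"
    and j: "0 < j" "j < Suc k"
  shows "A $$ (0, j) = 0"
proof -
  have "(A * mat_adjoint A) $$ (0, 0) = (mat_adjoint A * A) $$ (0, 0)"
    by (simp add: normal)
  then have "A $$ (0, 0) * cnj (A $$ (0, 0)) + (\<Sum>l<k. A $$ (0, Suc l) * cnj (A $$ (0, Suc l)))
      = cnj (A $$ (0, 0)) * A $$ (0, 0) + (\<Sum>l<k. cnj (A $$ (Suc l, 0)) * A $$ (Suc l, 0))"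
    using A by (simp add: mult_adjoint_index adjoint_mult_index sum.lessThan_Suc_shift
        del: sum.lessThan_Suc index_mult_mat(1))
  then have "(\<Sum>l<k. A $$ (0, Suc l) * cnj (A $$ (0, Suc l))) = 0"
    using col0 by (simp add: mult.commute)
  moreover have "(\<Sum>l<k. A $$ (0, Suc l) * cnj (A $$ (0, Suc l)))
      = of_real (\<Sum>l<k. (cmod (A $$ (0, Suc l)))\<^sup>2)"
    by (simp only: of_real_sum complex_norm_square)
  ultimately have "(\<Sum>l<k. (cmod (A $$ (0, Suc l)))\<^sup>2) = 0"
    by (metis of_real_eq_0_iff)
  then have "\<forall>l<k. (cmod (A $$ (0, Suc l)))\<^sup>2 = 0"
    by (simp add: sum_nonneg_eq_0_iff)
  then show ?thesis
    using j by (cases j) auto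
qed

lemma normal_lower_block:
  fixes A :: "complex mat"
  assumes A: "A \<in> carrier_mat (Suc k) (Suc k)" and normal: "A * mat_adjoint A = mat_adjoint A * A"
    and col0: "\<And>i. 0 < i \<Longrightarrow> i < Suc k \<Longrightarrow> A $$ (i, 0) = 0"
    and row0: "\<And>j. 0 < j \<Longrightarrow> j < Suc k \<Longrightarrow> A $$ (0, j) = 0"
  defines "B \<equiv> mat k k (\<lambda>(i, j). A $$ (Suc i, Suc j))"
  shows "B * mat_adjoint B = mat_adjoint B * B"
proof (rule eq_matI)
  fix i j
  assume "i < dim_row (mat_adjoint B * B)" "j < dim_col (mat_adjoint B * B)"
  then have ij: "i < k" "j < k"
    by (auto simp: B_def)
  have "(B * mat_adjoint B) $$ (i, j) = (A * mat_adjoint A) $$ (Suc i, Suc j)"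
    using A ij col0 by (simp add: B_def mult_adjoint_index sum.lessThan_Suc_shift del: sum.lessThan_Suc index_mult_mat(1))
  also have "\<dots> = (mat_adjoint A * A) $$ (Suc i, Suc j)"
    by (simp add: normal)
  also have "\<dots> = (mat_adjoint B * B) $$ (i, j)"
    using A ij row0 by (simp add: B_def adjoint_mult_index sum.lessThan_Suc_shift
        del: sum.lessThan_Suc index_mult_mat(1))
  finally show "(B * mat_adjoint B) $$ (i, j) = (mat_adjoint B * B) $$ (i, j)" .
qed (auto simp: B_def)

lemma unitary_one_block:
  assumes U: "unitary_mat k U"
  shows "unitary_mat (Suc k) (mat (Suc k) (Suc k) (\<lambda>(i, j).
    if i = 0 \<or> j = 0 then of_bool (i = j) else U $$ (i - 1, j - 1)))" (is "unitary_mat _ ?V")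
  unfolding unitary_mat_def
proof (intro conjI eq_matI)
  fix i j
  assume "i < dim_row (1\<^sub>m (Suc k) :: complex mat)" "j < dim_col (1\<^sub>m (Suc k) :: complex mat)"
  then show "(?V * mat_adjoint ?V) $$ (i, j) = 1\<^sub>m (Suc k) $$ (i, j)"
    using unitary_rows[OF U, of "i - 1" "j - 1"]
    by (cases i; cases j) (auto simp: mult_adjoint_index sum.lessThan_Suc_shift
        simp del: sum.lessThan_Suc index_mult_mat(1))
qed auto

lemma unitary_diag_block:
  fixes A :: "complex mat"
  assumes A: "A \<in> carrier_mat (Suc k) (Suc k)"
    and col0: "\<And>i. 0 < i \<Longrightarrow> i < Suc k \<Longrightarrow> A $$ (i, 0) = 0"
    and row0: "\<And>j. 0 < j \<Longrightarrow> j < Suc k \<Longrightarrow> A $$ (0, j) = 0"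
    and U: "unitary_mat k U" and B: "mat k k (\<lambda>(i, j). A $$ (Suc i, Suc j)) = unitary_diag k U d"
  shows "\<exists>V d. unitary_mat (Suc k) V \<and> A = unitary_diag (Suc k) V d"
proof (intro exI conjI)
  have Uc: "U \<in> carrier_mat k k"
    using U by (rule unitary_carrier)
  define V where "V = mat (Suc k) (Suc k) (\<lambda>(i, j).
    if i = 0 \<or> j = 0 then of_bool (i = j) else U $$ (i - 1, j - 1))"
  show V: "unitary_mat (Suc k) V"
    unfolding V_def by (rule unitary_one_block[OF U])
  then have Vc: "V \<in> carrier_mat (Suc k) (Suc k)"
    by (rule unitary_carrier)
  show "A = unitary_diag (Suc k) V (case_nat (A $$ (0, 0)) d)"
  proof (rule eq_matI)
    fix i j
    assume "i < dim_row (unitary_diag (Suc k) V (case_nat (A $$ (0, 0)) d))"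
      "j < dim_col (unitary_diag (Suc k) V (case_nat (A $$ (0, 0)) d))"
    then have ij: "i < Suc k" "j < Suc k"
      using Vc by auto
    show "A $$ (i, j) = unitary_diag (Suc k) V (case_nat (A $$ (0, 0)) d) $$ (i, j)"
    proof (cases i; cases j)
      fix i' j'
      assume "i = Suc i'" "j = Suc j'"
      moreover have "A $$ (Suc i', Suc j') = unitary_diag k U d $$ (i', j')"
        using ij \<open>i = Suc i'\<close> \<open>j = Suc j'\<close> by (simp flip: B)
      ultimately show ?thesis
        using ij Vc Uc by (simp add: unitary_diag_index V_def sum.lessThan_Suc_shift
            del: sum.lessThan_Suc)
    qed (use ij Vc col0 row0 in \<open>auto simp: unitary_diag_index V_def sum.lessThan_Suc_shift
          simp del: sum.lessThan_Suc\<close>)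
  qed (use A Vc in auto)
qed

theorem normal_unitary_diagonalizable:
  fixes N :: "complex mat"
  assumes "N \<in> carrier_mat n n" and "N * mat_adjoint N = mat_adjoint N * N"
  shows "\<exists>U d. unitary_mat n U \<and> N = unitary_diag n U d"
  using assms
proof (induction n arbitrary: N)
  case 0
  have "unitary_mat 0 (1\<^sub>m 0)"
    unfolding unitary_mat_def by (auto intro!: eq_matI)
  moreover have "N = unitary_diag 0 (1\<^sub>m 0) d" for d
    using 0 by (intro eq_matI) auto
  ultimately show ?case
    by blast
next
  case (Suc k N)
  note N = Suc.prems(1) and normal = Suc.prems(2)
  obtain e v where v: "v \<in> carrier_vec (Suc k)" "v \<noteq> 0\<^sub>v (Suc k)" and ev: "N *\<^sub>v v = e \<cdot>\<^sub>v v"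
    using spectrum_non_empty[OF N] N unfolding spectrum_def eigenvalue_def eigenvector_def by auto
  obtain W c where W: "unitary_mat (Suc k) W" and Wv: "col W 0 = c \<cdot>\<^sub>v v"
    using unitary_completion[OF v] by blast
  have Wc: "W \<in> carrier_mat (Suc k) (Suc k)"
    using W by (rule unitary_carrier)
  define A where "A = mat_adjoint W * (N * W)"
  have A: "A \<in> carrier_mat (Suc k) (Suc k)"
    unfolding A_def using Wc N by auto
  have normalA: "A * mat_adjoint A = mat_adjoint A * A"
    unfolding A_def by (rule normal_unitary_conj[OF N normal W])
  have col0: "A $$ (i, 0) = 0" if "0 < i" "i < Suc k" for i
    using unitary_conj_eigenvector_col[OF N W v(1) Wv ev, of i] that unfolding A_def by simp
  have row0: "A $$ (0, j) = 0" if "0 < j" "j < Suc k" for j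
    using normal_first_row_zero[OF A normalA col0 that] .
  obtain U d where "unitary_mat k U" "mat k k (\<lambda>(i, j). A $$ (Suc i, Suc j)) = unitary_diag k U d"
    using Suc.IH[OF _ normal_lower_block[OF A normalA col0 row0]] by auto
  then obtain V d' where V: "unitary_mat (Suc k) V" and AV: "A = unitary_diag (Suc k) V d'"
    using unitary_diag_block[OF A col0 row0] by blast
  have "N = W * A * mat_adjoint W"
    unfolding A_def using Wc N W
    by (simp add: assoc_mult_mat[of _ "Suc k" "Suc k" _ "Suc k" _ "Suc k"] unitary_cancel_right
        unitary_mat_def)
  also have "\<dots> = unitary_diag (Suc k) (W * V) d'"
    unfolding AV using Wc unitary_carrier[OF V] by (rule unitary_diag_conj)
  finally show ?case
    using unitary_mult[OF W V] by blast
qed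

section \<open>Commuting Hermitian matrices\<close>

lemma hermitian_index:
  "hermitian_mat n A \<Longrightarrow> i < n \<Longrightarrow> j < n \<Longrightarrow> A $$ (i, j) = cnj (A $$ (j, i))"
  unfolding hermitian_mat_def by (metis adjoint_index carrier_matD)

lemma adjoint_hermitian_combination:
  assumes hA: "hermitian_mat n A" and hB: "hermitian_mat n B"
  shows "mat_adjoint (A + \<i> \<cdot>\<^sub>m B) = A - \<i> \<cdot>\<^sub>m B"
proof -
  have A: "A \<in> carrier_mat n n" and B: "B \<in> carrier_mat n n"
    using hA hB unfolding hermitian_mat_def by auto
  show ?thesis
  proof (rule eq_matI)
    fix i j
    assume "i < dim_row (A - \<i> \<cdot>\<^sub>m B)" "j < dim_col (A - \<i> \<cdot>\<^sub>m B)"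
    then have ij: "i < n" "j < n"
      using A B by auto
    show "mat_adjoint (A + \<i> \<cdot>\<^sub>m B) $$ (i, j) = (A - \<i> \<cdot>\<^sub>m B) $$ (i, j)"
      using ij A B hermitian_index[OF hA ij] hermitian_index[OF hB ij] by simp
  qed (use A B in auto)
qed

lemma commuting_hermitian_normal:
  assumes hA: "hermitian_mat n A" and hB: "hermitian_mat n B" and AB: "A * B = B * A"
  defines "N \<equiv> A + \<i> \<cdot>\<^sub>m B"
  shows "N * mat_adjoint N = mat_adjoint N * N"
proof -
  have A: "A \<in> carrier_mat n n" and B: "B \<in> carrier_mat n n"
    using hA hB unfolding hermitian_mat_def by auto
  have adjN: "mat_adjoint N = A - \<i> \<cdot>\<^sub>m B"
    unfolding N_def by (rule adjoint_hermitian_combination[OF hA hB])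
  show ?thesis
  proof (rule eq_matI)
    fix i j
    assume "i < dim_row (mat_adjoint N * N)" "j < dim_col (mat_adjoint N * N)"
    then have ij: "i < n" "j < n"
      using A B by (auto simp: N_def)
    have entry: "(X * Y) $$ (i, j) = (\<Sum>l<n. X $$ (i, l) * Y $$ (l, j))"
      if "X \<in> carrier_mat n n" "Y \<in> carrier_mat n n" for X Y :: "complex mat"
      using that ij by (auto simp: scalar_prod_def lessThan_atLeast0 intro!: sum.cong)
    have "(N * mat_adjoint N) $$ (i, j)
        = (\<Sum>l<n. (A $$ (i, l) + \<i> * B $$ (i, l)) * (A $$ (l, j) - \<i> * B $$ (l, j)))"
      unfolding adjN using A B ij by (subst entry) (auto simp: N_def intro!: sum.cong)
    also have "\<dots> = (\<Sum>l<n. A $$ (i, l) * A $$ (l, j) + B $$ (i, l) * B $$ (l, j)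
        + \<i> * (B $$ (i, l) * A $$ (l, j) - A $$ (i, l) * B $$ (l, j)))"
      by (simp add: algebra_simps)
    also have "\<dots> = (A * A) $$ (i, j) + (B * B) $$ (i, j) + \<i> * ((B * A) $$ (i, j) - (A * B) $$ (i, j))"
      using A B by (simp add: entry sum.distrib sum_subtractf sum_distrib_left right_diff_distrib)
    finally have NN: "(N * mat_adjoint N) $$ (i, j) = (A * A) $$ (i, j) + (B * B) $$ (i, j)"
      by (simp add: AB)
    have "(mat_adjoint N * N) $$ (i, j)
        = (\<Sum>l<n. (A $$ (i, l) - \<i> * B $$ (i, l)) * (A $$ (l, j) + \<i> * B $$ (l, j)))"
      unfolding adjN using A B ij by (subst entry) (auto simp: N_def intro!: sum.cong)
    also have "\<dots> = (\<Sum>l<n. A $$ (i, l) * A $$ (l, j) + B $$ (i, l) * B $$ (l, j)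
        + \<i> * (A $$ (i, l) * B $$ (l, j) - B $$ (i, l) * A $$ (l, j)))"
      by (simp add: algebra_simps)
    also have "\<dots> = (A * A) $$ (i, j) + (B * B) $$ (i, j) + \<i> * ((A * B) $$ (i, j) - (B * A) $$ (i, j))"
      using A B by (simp add: entry sum.distrib sum_subtractf sum_distrib_left right_diff_distrib)
    finally show "(N * mat_adjoint N) $$ (i, j) = (mat_adjoint N * N) $$ (i, j)"
      by (simp add: AB NN)
  qed (use A B in \<open>auto simp: adjN N_def\<close>)
qed

lemma unitary_diag_hermitian_parts:
  assumes hA: "hermitian_mat n A" and hB: "hermitian_mat n B" and U: "unitary_mat n U"
    and N: "A + \<i> \<cdot>\<^sub>m B = unitary_diag n U d"
  shows "A = unitary_diag n U (\<lambda>l. of_real (Re (d l)))"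
    and "B = unitary_diag n U (\<lambda>l. of_real (Im (d l)))"
proof -
  have A: "A \<in> carrier_mat n n" and B: "B \<in> carrier_mat n n"
    using hA hB unfolding hermitian_mat_def by auto
  have Uc: "U \<in> carrier_mat n n"
    using U by (rule unitary_carrier)
  have adj: "A - \<i> \<cdot>\<^sub>m B = unitary_diag n U (\<lambda>l. cnj (d l))"
    using adjoint_hermitian_combination[OF hA hB] adjoint_unitary_diag[OF Uc, of d] by (simp add: N)
  have "A = (1 / 2) \<cdot>\<^sub>m ((A + \<i> \<cdot>\<^sub>m B) + (A - \<i> \<cdot>\<^sub>m B))"
    using A B by (intro eq_matI) auto
  also have "\<dots> = unitary_diag n U (\<lambda>l. 1 / 2 * (d l + cnj (d l)))"
    unfolding N adj unitary_diag_add[OF Uc] unitary_diag_smult[OF Uc] ..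
  also have "(\<lambda>l. 1 / 2 * (d l + cnj (d l))) = (\<lambda>l. of_real (Re (d l)))"
    by (auto simp: complex_eq_iff)
  finally show "A = unitary_diag n U (\<lambda>l. of_real (Re (d l)))" .
  have "B = (- \<i> / 2) \<cdot>\<^sub>m ((A + \<i> \<cdot>\<^sub>m B) - (A - \<i> \<cdot>\<^sub>m B))"
    using A B by (intro eq_matI) (auto simp: algebra_simps)
  also have "\<dots> = unitary_diag n U (\<lambda>l. - \<i> / 2 * (d l - cnj (d l)))"
    unfolding N adj unitary_diag_diff[OF Uc] unitary_diag_smult[OF Uc] ..
  also have "(\<lambda>l. - \<i> / 2 * (d l - cnj (d l))) = (\<lambda>l. of_real (Im (d l)))"
    by (auto simp: complex_eq_iff)
  finally show "B = unitary_diag n U (\<lambda>l. of_real (Im (d l)))" .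
qed

theorem commuting_hermitian_simultaneous_diag:
  assumes hA: "hermitian_mat n A" and hB: "hermitian_mat n B" and AB: "A * B = B * A"
  shows "\<exists>U a b. unitary_mat n U \<and> A = unitary_diag n U (\<lambda>i. of_real (a i))
    \<and> B = unitary_diag n U (\<lambda>i. of_real (b i))"
proof -
  have "A + \<i> \<cdot>\<^sub>m B \<in> carrier_mat n n"
    using hA hB unfolding hermitian_mat_def by auto
  then obtain U d where U: "unitary_mat n U" and N: "A + \<i> \<cdot>\<^sub>m B = unitary_diag n U d"
    using normal_unitary_diagonalizable[OF _ commuting_hermitian_normal[OF assms]] by blast
  show ?thesis
    using U unitary_diag_hermitian_parts[OF hA hB U N]
    by (intro exI[of _ U] exI[of _ "\<lambda>l. Re (d l)"] exI[of _ "\<lambda>l. Im (d l)"]) simp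
qed

text \<open>If \<open>U D\<^sub>d U\<^sup>* = V D\<^sub>e V\<^sup>*\<close>, then \<open>G = V\<^sup>* U\<close> intertwines \<open>D\<^sub>d\<close> and \<open>D\<^sub>e\<close>, so
  \<open>G\<^sub>a\<^sub>b = 0\<close> unless \<open>d\<^sub>b = e\<^sub>a\<close>; hence \<open>G\<close> also intertwines \<open>D\<^sub>f\<^sub>\<circ>\<^sub>d\<close> and \<open>D\<^sub>f\<^sub>\<circ>\<^sub>e\<close>.\<close>

lemma unitary_diag_fun_cong:
  assumes U: "unitary_mat n U" and V: "unitary_mat n V"
    and eq: "unitary_diag n U d = unitary_diag n V e"
  shows "unitary_diag n U (\<lambda>i. f (d i)) = unitary_diag n V (\<lambda>i. f (e i))"
proof -
  have Uc: "U \<in> carrier_mat n n" and Vc: "V \<in> carrier_mat n n"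
    using U V by (auto simp: unitary_carrier)
  define G where "G = mat_adjoint V * U"
  have G: "G \<in> carrier_mat n n"
    unfolding G_def using Uc Vc by auto
  have UU: "U * mat_adjoint U = 1\<^sub>m n"
    using U unfolding unitary_mat_def by simp
  have intertwine: "G * mat_diag n d' = mat_diag n e' * G
      \<longleftrightarrow> unitary_diag n U d' = unitary_diag n V e'" for d' e'
  proof
    assume GD: "G * mat_diag n d' = mat_diag n e' * G"
    have "unitary_diag n U d' = V * (G * mat_diag n d') * mat_adjoint U"
      unfolding G_def unitary_diag_def using Uc Vc
      by (simp add: assoc_mult_mat[of _ n n _ n _ n] unitary_cancel_right[OF V, of _ n])
    also have "\<dots> = unitary_diag n V e'"
      unfolding GD unfolding G_def unitary_diag_def using Uc Vc
      by (simp add: assoc_mult_mat[of _ n n _ n _ n] UU)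
    finally show "unitary_diag n U d' = unitary_diag n V e'" .
  next
    assume eq': "unitary_diag n U d' = unitary_diag n V e'"
    have "G * mat_diag n d' = mat_adjoint V * unitary_diag n U d' * U"
      unfolding G_def unitary_diag_def using Uc Vc
      by (simp add: assoc_mult_mat[of _ n n _ n _ n] unitary_adjoint_mult[OF U]
          right_mult_one_mat[OF mat_diag_dim])
    also have "\<dots> = mat_diag n e' * G"
      unfolding eq' unfolding G_def unitary_diag_def using Uc Vc
      by (simp add: assoc_mult_mat[of _ n n _ n _ n] unitary_cancel_left[OF V, of _ n])
    finally show "G * mat_diag n d' = mat_diag n e' * G" .
  qed
  have "G $$ (a, b) * d b = e a * G $$ (a, b)" if "a < n" "b < n" for a b
    using arg_cong[OF eq[folded intertwine], of "\<lambda>M. M $$ (a, b)"] that G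
    by (simp add: mat_diag_mult_right[OF G] mat_diag_mult_left[OF G])
  then have "G $$ (a, b) * f (d b) = f (e a) * G $$ (a, b)" if "a < n" "b < n" for a b
    using that by (metis mult.commute mult_cancel_left)
  then have "G * mat_diag n (\<lambda>i. f (d i)) = mat_diag n (\<lambda>i. f (e i)) * G"
    using G by (intro eq_matI) (auto simp: mat_diag_mult_right[OF G] mat_diag_mult_left[OF G])
  then show ?thesis
    by (simp add: intertwine)
qed

text \<open>\<open>mat_fun\<close> chooses an arbitrary spectral decomposition; by \<open>unitary_diag_fun_cong\<close>
  the choice does not matter.\<close>

lemma mat_fun_unitary_diag:
  assumes U: "unitary_mat n U"
  shows "mat_fun f n (unitary_diag n U (\<lambda>i. of_real (d i)))
    = unitary_diag n U (\<lambda>i. of_real (f (d i)))"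
proof -
  let ?A = "unitary_diag n U (\<lambda>i. of_real (d i))"
  let ?P = "\<lambda>B. \<exists>V e. unitary_mat n V \<and> ?A = unitary_diag n V (\<lambda>i. of_real (e i))
    \<and> B = unitary_diag n V (\<lambda>i. of_real (f (e i)))"
  have "?P (unitary_diag n U (\<lambda>i. of_real (f (d i))))"
    using U by blast
  then have "?P (SOME B. ?P B)"
    by (rule someI)
  then obtain V e where V: "unitary_mat n V" and eq: "?A = unitary_diag n V (\<lambda>i. of_real (e i))"
    and B: "(SOME B. ?P B) = unitary_diag n V (\<lambda>i. of_real (f (e i)))"
    by blast
  have "mat_fun f n ?A = (SOME B. ?P B)"
    unfolding mat_fun_def unitary_diag_def ..
  also have "\<dots> = unitary_diag n U (\<lambda>i. of_real (f (d i)))"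
    unfolding B using unitary_diag_fun_cong[OF U V eq, of "\<lambda>z. of_real (f (Re z))"] by simp
  finally show ?thesis .
qed

definition M_classical :: "real \<Rightarrow> nat \<Rightarrow> (nat \<Rightarrow> real) \<Rightarrow> (nat \<Rightarrow> real) \<Rightarrow> real" where
  "M_classical x n p q = (\<Sum>i<n. p i * (log2' (p i) - log2' (q i) - (1 / ln 2 - log 2 x))\<^sup>2)"

lemma M_quantity_unitary_diag:
  assumes U: "unitary_mat n U" and p1: "(\<Sum>i<n. p i) = 1"
  shows "M_quantity x n (unitary_diag n U (\<lambda>i. of_real (p i))) (unitary_diag n U (\<lambda>i. of_real (q i)))
    = M_classical x n p q"
proof -
  have Uc: "U \<in> carrier_mat n n"
    using U by (rule unitary_carrier)
  define l where "l i = log2' (p i) - log2' (q i)" for i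
  define c where "c = 1 / ln 2 - log 2 x"
  have L: "mat_log n (unitary_diag n U (\<lambda>i. of_real (p i))) - mat_log n (unitary_diag n U (\<lambda>i. of_real (q i)))
      = unitary_diag n U (\<lambda>i. of_real (l i))"
    unfolding mat_log_def mat_fun_unitary_diag[OF U] unitary_diag_diff[OF Uc] l_def by simp
  have S: "rel_entropy n (unitary_diag n U (\<lambda>i. of_real (p i))) (unitary_diag n U (\<lambda>i. of_real (q i)))
      = (\<Sum>i<n. p i * l i)"
    unfolding rel_entropy_def L unitary_diag_mult[OF U] trace_unitary_diag[OF U] by simp
  have "M_quantity x n (unitary_diag n U (\<lambda>i. of_real (p i))) (unitary_diag n U (\<lambda>i. of_real (q i)))
      = (\<Sum>i<n. p i * (l i)\<^sup>2) - (\<Sum>i<n. p i * l i)\<^sup>2 + (c - (\<Sum>i<n. p i * l i))\<^sup>2"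
    unfolding M_quantity_def rel_variance_def S L unitary_diag_mult[OF U] trace_unitary_diag[OF U] c_def
    by (simp add: power2_eq_square)
  also have "\<dots> = (\<Sum>i<n. p i * (l i)\<^sup>2) - 2 * c * (\<Sum>i<n. p i * l i) + c\<^sup>2 * (\<Sum>i<n. p i)"
    unfolding p1 by (simp add: power2_eq_square algebra_simps)
  also have "\<dots> = M_classical x n p q"
    unfolding M_classical_def c_def[symmetric] l_def[symmetric]
    by (simp add: power2_eq_square algebra_simps sum.distrib sum_subtractf sum_distrib_left)
  finally show ?thesis .
qed

definition basis_entry :: "nat \<Rightarrow> complex mat \<Rightarrow> nat \<Rightarrow> complex mat \<Rightarrow> complex" where
  "basis_entry n V j X = (\<Sum>a<n. \<Sum>b<n. cnj (V $$ (a, j)) * X $$ (a, b) * V $$ (b, j))"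

lemma basis_entry_unitary_diag:
  assumes V: "unitary_mat n V" and j: "j < n"
  shows "basis_entry n V j (unitary_diag n V d) = d j"
proof -
  have "basis_entry n V j (unitary_diag n V d)
      = (\<Sum>l<n. (\<Sum>a<n. cnj (V $$ (a, j)) * V $$ (a, l)) * d l * (\<Sum>b<n. cnj (V $$ (b, l)) * V $$ (b, j)))"
    unfolding basis_entry_def using unitary_carrier[OF V]
    by (simp add: unitary_diag_index sum_distrib_left sum_distrib_right mult_ac)
      (subst sum.swap, subst (2) sum.swap, simp add: sum_distrib_left)
  also have "\<dots> = d j"
    using j by (simp add: unitary_cols[OF V] of_bool_def if_distrib cong: if_cong)
  finally show ?thesis .
qed

lemma basis_entry_psd:
  assumes "psd_mat n X" and "V \<in> carrier_mat n n" and "j < n"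
  shows "Re (basis_entry n V j X) \<ge> 0"
proof -
  have "(X *\<^sub>v col V j) \<bullet>c col V j = basis_entry n V j X"
    using assms unfolding basis_entry_def psd_mat_def hermitian_mat_def
    by (auto simp: scalar_prod_def mult_mat_vec_def lessThan_atLeast0 sum_distrib_left
        sum_distrib_right mult_ac intro!: sum.cong)
  then show ?thesis
    using assms unfolding psd_mat_def by (metis col_carrier_vec)
qed

lemma basis_entry_linear:
  assumes "X \<in> carrier_mat n n" and "Y \<in> carrier_mat n n"
  shows "basis_entry n V j (a \<cdot>\<^sub>m X + b \<cdot>\<^sub>m Y) = a * basis_entry n V j X + b * basis_entry n V j Y"
  using assms unfolding basis_entry_def
  by (simp add: ring_distribs sum.distrib sum_distrib_left mult_ac)

lemma sum_basis_entry:
  assumes V: "unitary_mat n V" and X: "X \<in> carrier_mat n n"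
  shows "(\<Sum>j<n. basis_entry n V j X) = mtrace X"
proof -
  have "(\<Sum>j<n. basis_entry n V j X)
      = (\<Sum>a<n. \<Sum>j<n. \<Sum>b<n. cnj (V $$ (a, j)) * X $$ (a, b) * V $$ (b, j))"
    unfolding basis_entry_def by (rule sum.swap)
  also have "\<dots> = (\<Sum>a<n. \<Sum>b<n. \<Sum>j<n. cnj (V $$ (a, j)) * X $$ (a, b) * V $$ (b, j))"
    by (intro sum.cong refl sum.swap)
  also have "\<dots> = (\<Sum>a<n. \<Sum>b<n. X $$ (a, b) * (\<Sum>j<n. V $$ (b, j) * cnj (V $$ (a, j))))"
    by (simp add: sum_distrib_left mult_ac)
  also have "\<dots> = mtrace X"
    using X by (simp add: unitary_rows[OF V] mtrace_def of_bool_def if_distrib cong: if_cong)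
  finally show ?thesis .
qed

lemma density_unitary_diag_eigenvalues:
  assumes "density_mat n (unitary_diag n U (\<lambda>i. of_real (p i)))" and U: "unitary_mat n U"
  shows "\<And>i. i < n \<Longrightarrow> p i \<ge> 0" and "(\<Sum>i<n. p i) = 1"
proof -
  have psd: "psd_mat n (unitary_diag n U (\<lambda>i. of_real (p i)))"
    and tr: "mtrace (unitary_diag n U (\<lambda>i. of_real (p i))) = 1"
    using assms(1) unfolding density_mat_def by auto
  show "p i \<ge> 0" if "i < n" for i
    using basis_entry_psd[OF psd unitary_carrier[OF U] that] basis_entry_unitary_diag[OF U that] by simp
  show "(\<Sum>i<n. p i) = 1"
    using tr unfolding trace_unitary_diag[OF U] by (metis of_real_eq_1_iff of_real_sum)
qed

lemma full_rank_unitary_diag_eigenvalues: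
  assumes "full_rank_mat (unitary_diag n U (\<lambda>i. of_real (q i)))" and "unitary_mat n U" and "i < n"
  shows "q i \<noteq> 0"
  using assms unfolding full_rank_mat_def spectrum_unitary_diag[OF assms(2)] by force

lemma min_eigenvalue_unitary_diag:
  assumes "unitary_mat n U"
  shows "min_eigenvalue (unitary_diag n U (\<lambda>i. of_real (q i))) = Min (q ` {..<n})"
  unfolding min_eigenvalue_def spectrum_unitary_diag[OF assms] image_image by simp

lemma commuting_states_unitary_diag:
  assumes "density_mat n \<rho>" and "density_mat n \<sigma>" and "\<rho> * \<sigma> = \<sigma> * \<rho>" and "full_rank_mat \<sigma>"
  obtains U p q where "unitary_mat n U"
    and "\<rho> = unitary_diag n U (\<lambda>i. of_real (p i))" and "\<sigma> = unitary_diag n U (\<lambda>i. of_real (q i))"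
    and "\<And>i. i < n \<Longrightarrow> p i \<ge> 0" and "(\<Sum>i<n. p i) = 1" and "\<And>i. i < n \<Longrightarrow> q i > 0"
proof -
  have "hermitian_mat n \<rho>" "hermitian_mat n \<sigma>"
    using assms(1,2) unfolding density_mat_def psd_mat_def by auto
  then obtain U p q where U: "unitary_mat n U"
    and \<rho>: "\<rho> = unitary_diag n U (\<lambda>i. of_real (p i))" and \<sigma>: "\<sigma> = unitary_diag n U (\<lambda>i. of_real (q i))"
    using commuting_hermitian_simultaneous_diag assms(3) by blast
  have "q i > 0" if "i < n" for i
    using density_unitary_diag_eigenvalues(1)[OF assms(2)[unfolded \<sigma>] U that]
      full_rank_unitary_diag_eigenvalues[OF assms(4)[unfolded \<sigma>] U that] by simp
  then show thesis
    using that[OF U \<rho> \<sigma>] density_unitary_diag_eigenvalues[OF assms(1)[unfolded \<rho>] U] by blast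
qed

section \<open>Quantum channels act on eigenvalues as stochastic matrices\<close>

definition col_proj :: "nat \<Rightarrow> complex mat \<Rightarrow> nat \<Rightarrow> complex mat" where
  "col_proj n U l = mat n n (\<lambda>(a, b). U $$ (a, l) * cnj (U $$ (b, l)))"

lemma col_proj_carrier [simp]: "col_proj n U l \<in> carrier_mat n n"
  unfolding col_proj_def by auto

lemma col_proj_psd: "psd_mat n (col_proj n U l)"
  unfolding psd_mat_def hermitian_mat_def
proof (intro conjI ballI col_proj_carrier)
  show "mat_adjoint (col_proj n U l) = col_proj n U l"
    by (rule eq_matI) (auto simp: col_proj_def)
next
  fix v :: "complex vec"
  assume v: "v \<in> carrier_vec n"
  define s where "s = (\<Sum>b<n. cnj (U $$ (b, l)) * v $ b)"
  have "(col_proj n U l *\<^sub>v v) \<bullet>c v = (\<Sum>a<n. U $$ (a, l) * s * cnj (v $ a))"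
    using v unfolding s_def
    by (auto simp: col_proj_def scalar_prod_def mult_mat_vec_def lessThan_atLeast0
        sum_distrib_left sum_distrib_right mult_ac intro!: sum.cong)
  also have "\<dots> = s * cnj s"
    unfolding s_def by (simp add: sum_distrib_left sum_distrib_right cnj_sum mult_ac)
  finally show "0 \<le> Re ((col_proj n U l *\<^sub>v v) \<bullet>c v)"
    by simp
qed

lemma unitary_diag_as_mat:
  assumes "U \<in> carrier_mat n n"
  shows "unitary_diag n U c = mat n n (\<lambda>(a, b). \<Sum>l<n. U $$ (a, l) * c l * cnj (U $$ (b, l)))"
  using assms by (intro eq_matI) (auto simp: unitary_diag_index)

lemma quantum_channelD:
  assumes "quantum_channel n m E"
  shows "X \<in> carrier_mat n n \<Longrightarrow> E X \<in> carrier_mat m m"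
    and "X \<in> carrier_mat n n \<Longrightarrow> Y \<in> carrier_mat n n
      \<Longrightarrow> E (a \<cdot>\<^sub>m X + b \<cdot>\<^sub>m Y) = a \<cdot>\<^sub>m E X + b \<cdot>\<^sub>m E Y"
    and "X \<in> carrier_mat n n \<Longrightarrow> mtrace (E X) = mtrace X"
  using assms unfolding quantum_channel_def by blast+

lemma quantum_channel_psd:
  assumes E: "quantum_channel n m E" and X: "psd_mat n X"
  shows "psd_mat m (E X)"
proof -
  have Xc: "X \<in> carrier_mat n n"
    using X unfolding psd_mat_def hermitian_mat_def by auto
  have "mat_block n X 0 0 = X"
    using Xc unfolding mat_block_def by (intro eq_matI) auto
  moreover have "E X \<in> carrier_mat m m"
    using quantum_channelD(1)[OF E Xc] .
  ultimately have "ampliate n m 1 E X = E X"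
    unfolding ampliate_def by (intro eq_matI) auto
  moreover have "\<forall>k M. psd_mat (k * n) M \<longrightarrow> psd_mat (k * m) (ampliate n m k E M)"
    using E unfolding quantum_channel_def by blast
  then have "psd_mat (1 * m) (ampliate n m 1 E X)"
    using X by (metis mult_1)
  ultimately show ?thesis
    by simp
qed

text \<open>The channel is only assumed linear in pairs, so the spectral sum
  \<open>\<Sum>\<^sub>l c\<^sub>l |u\<^sub>l\<rangle>\<langle>u\<^sub>l|\<close> is taken apart through its partial sums.\<close>

lemma channel_basis_entry_unitary_diag:
  assumes E: "quantum_channel n m E" and U: "U \<in> carrier_mat n n"
  shows "basis_entry m V j (E (unitary_diag n U c))
    = (\<Sum>l<n. c l * basis_entry m V j (E (col_proj n U l)))"
proof -
  note carrier = quantum_channelD(1)[OF E] and linear = quantum_channelD(2)[OF E]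
  define R where "R k = mat n n (\<lambda>(a, b). \<Sum>l<k. U $$ (a, l) * c l * cnj (U $$ (b, l)))" for k
  have R: "R k \<in> carrier_mat n n" for k
    unfolding R_def by auto
  have "basis_entry m V j (E (R k)) = (\<Sum>l<k. c l * basis_entry m V j (E (col_proj n U l)))" for k
  proof (induction k)
    case 0
    have "R 0 = 0 \<cdot>\<^sub>m R 0 + 0 \<cdot>\<^sub>m R 0"
      by (rule eq_matI) (auto simp: R_def)
    then have "E (R 0) = 0 \<cdot>\<^sub>m E (R 0) + 0 \<cdot>\<^sub>m E (R 0)"
      using linear[OF R R] by metis
    then have "basis_entry m V j (E (R 0)) = 0 * basis_entry m V j (E (R 0)) + 0 * basis_entry m V j (E (R 0))"
      using basis_entry_linear[OF carrier[OF R] carrier[OF R]] by metis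
    then show ?case
      by simp
  next
    case (Suc k)
    have "R (Suc k) = 1 \<cdot>\<^sub>m R k + c k \<cdot>\<^sub>m col_proj n U k"
      by (rule eq_matI) (auto simp: R_def col_proj_def algebra_simps)
    then have "E (R (Suc k)) = 1 \<cdot>\<^sub>m E (R k) + c k \<cdot>\<^sub>m E (col_proj n U k)"
      using linear[OF R col_proj_carrier] by metis
    then have "basis_entry m V j (E (R (Suc k)))
        = 1 * basis_entry m V j (E (R k)) + c k * basis_entry m V j (E (col_proj n U k))"
      using basis_entry_linear[OF carrier[OF R] carrier[OF col_proj_carrier]] by metis
    then show ?case
      using Suc by simp
  qed
  moreover have "R n = unitary_diag n U c"
    unfolding R_def unitary_diag_as_mat[OF U] ..
  ultimately show ?thesis
    by metis
qed

definition channel_transition ::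
  "nat \<Rightarrow> nat \<Rightarrow> (complex mat \<Rightarrow> complex mat) \<Rightarrow> complex mat \<Rightarrow> complex mat \<Rightarrow> nat \<Rightarrow> nat \<Rightarrow> real" where
  "channel_transition n m E U V j i = Re (basis_entry m V j (E (col_proj n U i)))"

lemma channel_transition_nonneg:
  assumes "quantum_channel n m E" and "V \<in> carrier_mat m m" and "j < m"
  shows "channel_transition n m E U V j i \<ge> 0"
  unfolding channel_transition_def using assms by (metis basis_entry_psd quantum_channel_psd col_proj_psd)

lemma channel_transition_stochastic:
  assumes E: "quantum_channel n m E" and U: "unitary_mat n U" and V: "unitary_mat m V" and i: "i < n"
  shows "(\<Sum>j<m. channel_transition n m E U V j i) = 1"
proof -
  have "(\<Sum>j<m. basis_entry m V j (E (col_proj n U i))) = mtrace (E (col_proj n U i))"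
    by (intro sum_basis_entry[OF V] quantum_channelD(1)[OF E] col_proj_carrier)
  also have "\<dots> = mtrace (col_proj n U i)"
    by (intro quantum_channelD(3)[OF E] col_proj_carrier)
  also have "\<dots> = 1"
    using unitary_cols[OF U i i] by (simp add: mtrace_def col_proj_def mult.commute)
  finally have "Re (\<Sum>j<m. basis_entry m V j (E (col_proj n U i))) = 1"
    by simp
  then show ?thesis
    unfolding channel_transition_def by (simp add: Re_sum)
qed

lemma channel_unitary_diag_eigenvalues:
  assumes E: "quantum_channel n m E" and U: "unitary_mat n U" and V: "unitary_mat m V" and j: "j < m"
    and EX: "E (unitary_diag n U (\<lambda>i. of_real (c i))) = unitary_diag m V (\<lambda>i. of_real (c' i))"
  shows "c' j = (\<Sum>i<n. channel_transition n m E U V j i * c i)"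
proof -
  have "of_real (c' j) = basis_entry m V j (E (unitary_diag n U (\<lambda>i. of_real (c i))))"
    unfolding EX by (rule basis_entry_unitary_diag[OF V j, symmetric])
  also have "\<dots> = (\<Sum>i<n. of_real (c i) * basis_entry m V j (E (col_proj n U i)))"
    by (rule channel_basis_entry_unitary_diag[OF E unitary_carrier[OF U]])
  finally have "Re (of_real (c' j)) = Re (\<Sum>i<n. of_real (c i) * basis_entry m V j (E (col_proj n U i)))"
    by (rule arg_cong)
  then show ?thesis
    unfolding channel_transition_def by (simp add: Re_sum mult.commute)
qed

lemma channel_stochastic_on_eigenvalues:
  assumes E: "quantum_channel n m E" and U: "unitary_mat n U" and V: "unitary_mat m V"
  obtains W where "\<And>i j. i < n \<Longrightarrow> j < m \<Longrightarrow> W j i \<ge> 0" and "\<And>i. i < n \<Longrightarrow> (\<Sum>j<m. W j i) = 1"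
    and "\<And>c c' j. E (unitary_diag n U (\<lambda>i. of_real (c i))) = unitary_diag m V (\<lambda>i. of_real (c' i))
      \<Longrightarrow> j < m \<Longrightarrow> c' j = (\<Sum>i<n. W j i * c i)"
proof (rule that)
  show "channel_transition n m E U V j i \<ge> 0" if "j < m" for i j
    using channel_transition_nonneg[OF E unitary_carrier[OF V] that] .
  show "(\<Sum>j<m. channel_transition n m E U V j i) = 1" if "i < n" for i
    using channel_transition_stochastic[OF E U V that] .
  show "c' j = (\<Sum>i<n. channel_transition n m E U V j i * c i)"
    if "E (unitary_diag n U (\<lambda>i. of_real (c i))) = unitary_diag m V (\<lambda>i. of_real (c' i))" and "j < m"
    for c c' j
    using channel_unitary_diag_eigenvalues[OF E U V that(2,1)] .
qed

section \<open>Monotonicity of the classical quantity under stochastic maps\<close>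

definition M_kernel :: "real \<Rightarrow> real" where
  "M_kernel r = r * (ln r - 1)\<^sup>2"

lemma M_kernel_0 [simp]: "M_kernel 0 = 0"
  unfolding M_kernel_def by simp

lemma M_kernel_deriv: "y > 0 \<Longrightarrow> (M_kernel has_real_derivative (ln y)\<^sup>2 - 1) (at y)"
  unfolding M_kernel_def[abs_def]
  by (rule derivative_eq_intros refl | simp)+ (simp add: field_simps power2_eq_square)

lemma ln_sq_antimono:
  fixes a b :: real
  assumes "0 < a" and "a \<le> b" and "b \<le> 1"
  shows "(ln b)\<^sup>2 \<le> (ln a)\<^sup>2"
proof -
  have "- ln b \<le> - ln a" "0 \<le> - ln b"
    using assms by auto
  then show ?thesis
    using power_mono[of "- ln b" "- ln a" 2] by simp
qed

text \<open>\<open>M_kernel\<close> is concave on \<open>[0, 1]\<close> (its derivative \<open>(ln r)\<^sup>2 - 1\<close> decreases there),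
  so it lies below its tangents.\<close>

lemma M_kernel_tangent:
  fixes r s :: real
  assumes r: "0 \<le> r" "r \<le> 1" and s: "0 < s" "s \<le> 1"
  shows "M_kernel r \<le> M_kernel s + ((ln s)\<^sup>2 - 1) * (r - s)"
proof (cases "r = 0")
  case True
  have "ln s \<le> 0"
    using s by simp
  then have "0 \<le> s * (1 - ln s)"
    using s by (intro mult_nonneg_nonneg) linarith+
  moreover have "M_kernel s + ((ln s)\<^sup>2 - 1) * (r - s) = 2 * (s * (1 - ln s))"
    unfolding M_kernel_def True by (simp add: algebra_simps power2_eq_square)
  ultimately show ?thesis
    using True by simp
next
  case False
  define \<phi> where "\<phi> y = M_kernel s + ((ln s)\<^sup>2 - 1) * (y - s) - M_kernel y" for y
  have deriv: "(\<phi> has_real_derivative (ln s)\<^sup>2 - (ln y)\<^sup>2) (at y)" if "y > 0" for y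
    unfolding \<phi>_def[abs_def]
    by (rule derivative_eq_intros M_kernel_deriv[OF that] refl | simp)+
  have "\<phi> s \<le> \<phi> r"
  proof (cases "r \<le> s")
    case True
    show ?thesis
    proof (rule DERIV_nonpos_imp_nonincreasing[OF True])
      fix y
      assume y: "r \<le> y" "y \<le> s"
      then have "y > 0"
        using False r by simp
      then show "\<exists>d. (\<phi> has_real_derivative d) (at y) \<and> d \<le> 0"
        using deriv ln_sq_antimono[of y s] y s by (auto intro!: exI[of _ "(ln s)\<^sup>2 - (ln y)\<^sup>2"])
    qed
  next
    case False
    show ?thesis
    proof (rule DERIV_nonneg_imp_nondecreasing[of s r \<phi>])
      show "s \<le> r"
        using False by simp
      fix y
      assume y: "s \<le> y" "y \<le> r"
      then have "y > 0"
        using s by simp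
      then show "\<exists>d. (\<phi> has_real_derivative d) (at y) \<and> d \<ge> 0"
        using deriv ln_sq_antimono[of s y] y s r by (auto intro!: exI[of _ "(ln s)\<^sup>2 - (ln y)\<^sup>2"])
    qed
  qed
  then show ?thesis
    unfolding \<phi>_def by simp
qed

lemma M_kernel_jensen:
  fixes w r :: "nat \<Rightarrow> real"
  assumes w: "\<And>i. i < n \<Longrightarrow> w i \<ge> 0" and r: "\<And>i. i < n \<Longrightarrow> 0 \<le> r i \<and> r i \<le> 1"
    and Q: "(\<Sum>i<n. w i) > 0"
  shows "(\<Sum>i<n. w i * M_kernel (r i)) \<le> (\<Sum>i<n. w i) * M_kernel ((\<Sum>i<n. w i * r i) / (\<Sum>i<n. w i))"
proof -
  define Q where "Q = (\<Sum>i<n. w i)"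
  define S where "S = (\<Sum>i<n. w i * r i)"
  define s where "s = S / Q"
  have "S \<ge> 0" "S \<le> Q"
    unfolding S_def Q_def using w r by (auto intro!: sum_nonneg sum_mono intro: mult_left_le)
  then have s: "0 \<le> s" "s \<le> 1"
    unfolding s_def using Q Q_def by auto
  have "(\<Sum>i<n. w i * M_kernel (r i)) \<le> Q * M_kernel s"
  proof (cases "s = 0")
    case True
    then have "S = 0"
      unfolding s_def using Q Q_def by auto
    then have "\<forall>i\<in>{..<n}. w i * r i = 0"
      unfolding S_def using w r by (subst (asm) sum_nonneg_eq_0_iff) auto
    then have "(\<Sum>i<n. w i * M_kernel (r i)) = 0"
      unfolding M_kernel_def by (intro sum.neutral) auto
    then show ?thesis
      using True by simp
  next
    case False
    then have "s > 0"
      using s by simp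
    then have "(\<Sum>i<n. w i * M_kernel (r i))
        \<le> (\<Sum>i<n. w i * (M_kernel s + ((ln s)\<^sup>2 - 1) * (r i - s)))"
      using w r s by (intro sum_mono mult_left_mono M_kernel_tangent) auto
    also have "\<dots> = Q * M_kernel s + ((ln s)\<^sup>2 - 1) * (S - Q * s)"
      unfolding Q_def S_def
      by (simp add: algebra_simps sum.distrib sum_distrib_left sum_distrib_right sum_subtractf)
    also have "S - Q * s = 0"
      unfolding s_def using Q Q_def by simp
    finally show ?thesis
      by simp
  qed
  then show ?thesis
    unfolding s_def S_def Q_def .
qed

lemma M_summand_eq:
  fixes x p q :: real
  assumes x: "x > 0" and q: "q > 0" and p: "p \<ge> 0"
  shows "p * (log2' p - log2' q - (1 / ln 2 - log 2 x))\<^sup>2 = q * M_kernel (x * p / q) / (x * (ln 2)\<^sup>2)"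
proof (cases "p = 0")
  case False
  then have "p > 0"
    using p by simp
  then have ln_eq: "ln (x * p / q) = ln x + ln p - ln q"
    using x q by (simp add: ln_div ln_mult)
  have "q * M_kernel (x * p / q) / (x * (ln 2)\<^sup>2) = p * (ln x + ln p - ln q - 1)\<^sup>2 / (ln 2)\<^sup>2"
    unfolding M_kernel_def ln_eq using x q by (simp add: field_simps)
  also have "\<dots> = p * (log2' p - log2' q - (1 / ln 2 - log 2 x))\<^sup>2"
    unfolding log2'_def using x q \<open>p > 0\<close> by (simp add: log_def field_simps power2_eq_square)
  finally show ?thesis
    by simp
qed simp

text \<open>Via \<open>M_summand_eq\<close>, \<open>M_classical\<close> is a perspective \<open>\<Sum>\<^sub>i q\<^sub>i M_kernel (x p\<^sub>i / q\<^sub>i)\<close> of the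
  concave \<open>M_kernel\<close>; the hypothesis \<open>x p\<^sub>i \<le> q\<^sub>i\<close> keeps the arguments in \<open>[0, 1]\<close>.\<close>

lemma M_classical_stochastic_mono:
  fixes p q :: "nat \<Rightarrow> real" and W :: "nat \<Rightarrow> nat \<Rightarrow> real"
  assumes x: "x > 0"
    and p: "\<And>i. i < n \<Longrightarrow> p i \<ge> 0" and q: "\<And>i. i < n \<Longrightarrow> q i > 0"
    and pq: "\<And>i. i < n \<Longrightarrow> x * p i \<le> q i"
    and W: "\<And>i j. i < n \<Longrightarrow> j < m \<Longrightarrow> W j i \<ge> 0"
    and W_sum: "\<And>i. i < n \<Longrightarrow> (\<Sum>j<m. W j i) = 1"
    and Wq: "\<And>j. j < m \<Longrightarrow> (\<Sum>i<n. W j i * q i) > 0"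
  shows "M_classical x n p q \<le> M_classical x m (\<lambda>j. \<Sum>i<n. W j i * p i) (\<lambda>j. \<Sum>i<n. W j i * q i)"
proof -
  define K where "K = x * (ln 2)\<^sup>2"
  define r where "r i = x * p i / q i" for i
  have K: "K > 0"
    unfolding K_def using x by simp
  have r: "0 \<le> r i \<and> r i \<le> 1" if "i < n" for i
    unfolding r_def using p[OF that] q[OF that] pq[OF that] x by auto
  have "W j i * q i * r i = x * (W j i * p i)" if "i < n" for i j
    unfolding r_def using q[OF that] by simp
  then have Wqr: "(\<Sum>i<n. W j i * q i * r i) = x * (\<Sum>i<n. W j i * p i)" for j
    unfolding sum_distrib_left by (intro sum.cong) auto
  have "M_classical x n p q = (\<Sum>i<n. q i * M_kernel (r i)) / K"
    unfolding M_classical_def K_def r_def sum_divide_distrib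
    by (intro sum.cong refl) (simp add: M_summand_eq[OF x q p])
  also have "(\<Sum>i<n. q i * M_kernel (r i)) = (\<Sum>i<n. (\<Sum>j<m. W j i) * (q i * M_kernel (r i)))"
    by (simp add: W_sum)
  also have "\<dots> = (\<Sum>j<m. \<Sum>i<n. W j i * q i * M_kernel (r i))"
    by (subst sum.swap) (simp add: sum_distrib_right mult.assoc)
  also have "\<dots> \<le> (\<Sum>j<m. (\<Sum>i<n. W j i * q i) * M_kernel (x * (\<Sum>i<n. W j i * p i) / (\<Sum>i<n. W j i * q i)))"
    unfolding Wqr[symmetric]
  proof (rule sum_mono)
    fix j
    assume j: "j \<in> {..<m}"
    have "W j i * q i \<ge> 0" if "i < n" for i
      using W[OF that] q[OF that] j by simp
    then show "(\<Sum>i<n. W j i * q i * M_kernel (r i))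
        \<le> (\<Sum>i<n. W j i * q i) * M_kernel ((\<Sum>i<n. W j i * q i * r i) / (\<Sum>i<n. W j i * q i))"
      using r Wq j by (intro M_kernel_jensen) auto
  qed
  finally have "M_classical x n p q
      \<le> (\<Sum>j<m. (\<Sum>i<n. W j i * q i) * M_kernel (x * (\<Sum>i<n. W j i * p i) / (\<Sum>i<n. W j i * q i))) / K"
    using K by (simp add: divide_right_mono)
  also have "\<dots> = M_classical x m (\<lambda>j. \<Sum>i<n. W j i * p i) (\<lambda>j. \<Sum>i<n. W j i * q i)"
    unfolding M_classical_def K_def sum_divide_distrib
  proof (intro sum.cong refl)
    fix j
    assume "j \<in> {..<m}"
    then have "(\<Sum>i<n. W j i * p i) \<ge> 0"
      using W p by (auto intro: sum_nonneg)
    then show "(\<Sum>i<n. W j i * q i) * M_kernel (x * (\<Sum>i<n. W j i * p i) / (\<Sum>i<n. W j i * q i))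
        / (x * (ln 2)\<^sup>2)
      = (\<Sum>i<n. W j i * p i) * (log2' (\<Sum>i<n. W j i * p i) - log2' (\<Sum>i<n. W j i * q i)
        - (1 / ln 2 - log 2 x))\<^sup>2"
      using M_summand_eq[OF x Wq] \<open>j \<in> {..<m}\<close> by simp
  qed
  finally show ?thesis .
qed

lemma Min_weighted_le:
  fixes p q :: "nat \<Rightarrow> real"
  assumes p: "\<And>i. i < n \<Longrightarrow> p i \<ge> 0" "(\<Sum>i<n. p i) = 1" and q: "\<And>i. i < n \<Longrightarrow> q i > 0"
  shows "Min (q ` {..<n}) > 0" and "\<And>i. i < n \<Longrightarrow> Min (q ` {..<n}) * p i \<le> q i"
proof -
  have "n > 0"
    using p(2) by (cases n) auto
  then show pos: "Min (q ` {..<n}) > 0"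
    using Min_in[of "q ` {..<n}"] q by fastforce
  fix i
  assume i: "i < n"
  have "p i \<le> 1"
    using p member_le_sum[of i "{..<n}" p] i by auto
  then have "Min (q ` {..<n}) * p i \<le> Min (q ` {..<n})"
    using pos by (simp add: mult_left_le)
  also have "\<dots> \<le> q i"
    using i by simp
  finally show "Min (q ` {..<n}) * p i \<le> q i" .
qed

theorem theorem12:
  fixes n m :: nat and \<rho> \<sigma> \<rho>' \<sigma>' :: "complex mat"
  assumes "density_mat n \<rho>" and "density_mat n \<sigma>"
    and "\<rho> * \<sigma> = \<sigma> * \<rho>"
    and "density_mat m \<rho>'" and "density_mat m \<sigma>'"
    and "\<rho>' * \<sigma>' = \<sigma>' * \<rho>'"
    and "full_rank_mat \<sigma>" and "full_rank_mat \<sigma>'"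
    and "majorizes_pair n \<rho> \<sigma> m \<rho>' \<sigma>'"
  shows "M_quantity (min_eigenvalue \<sigma>) m \<rho>' \<sigma>' \<ge> M_quantity (min_eigenvalue \<sigma>) n \<rho> \<sigma>"
proof -
  obtain U p q where U: "unitary_mat n U" and \<rho>: "\<rho> = unitary_diag n U (\<lambda>i. of_real (p i))"
    and \<sigma>: "\<sigma> = unitary_diag n U (\<lambda>i. of_real (q i))"
    and p: "\<And>i. i < n \<Longrightarrow> p i \<ge> 0" "(\<Sum>i<n. p i) = 1" and q: "\<And>i. i < n \<Longrightarrow> q i > 0"
    using commuting_states_unitary_diag[OF assms(1-3,7)] by blast
  obtain V p' q' where V: "unitary_mat m V" and \<rho>': "\<rho>' = unitary_diag m V (\<lambda>i. of_real (p' i))"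
    and \<sigma>': "\<sigma>' = unitary_diag m V (\<lambda>i. of_real (q' i))"
    and p': "(\<Sum>i<m. p' i) = 1" and q': "\<And>j. j < m \<Longrightarrow> q' j > 0"
    using commuting_states_unitary_diag[OF assms(4-6,8)] by blast
  obtain E where E: "quantum_channel n m E" and E\<rho>: "E \<rho> = \<rho>'" and E\<sigma>: "E \<sigma> = \<sigma>'"
    using assms(9) unfolding majorizes_pair_def by blast
  obtain W where W: "\<And>i j. i < n \<Longrightarrow> j < m \<Longrightarrow> W j i \<ge> 0" "\<And>i. i < n \<Longrightarrow> (\<Sum>j<m. W j i) = 1"
    and eig: "\<And>c c' j. E (unitary_diag n U (\<lambda>i. of_real (c i))) = unitary_diag m V (\<lambda>i. of_real (c' i))
      \<Longrightarrow> j < m \<Longrightarrow> c' j = (\<Sum>i<n. W j i * c i)"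
    using channel_stochastic_on_eigenvalues[OF E U V] by blast
  have p'W: "p' j = (\<Sum>i<n. W j i * p i)" and q'W: "q' j = (\<Sum>i<n. W j i * q i)" if "j < m" for j
    using eig[OF E\<rho>[unfolded \<rho> \<rho>'] that] eig[OF E\<sigma>[unfolded \<sigma> \<sigma>'] that] by auto
  define x where "x = Min (q ` {..<n})"
  have "M_classical x n p q \<le> M_classical x m (\<lambda>j. \<Sum>i<n. W j i * p i) (\<lambda>j. \<Sum>i<n. W j i * q i)"
    unfolding x_def using Min_weighted_le[OF p q] q' q'W
    by (intro M_classical_stochastic_mono p q W) auto
  also have "\<dots> = M_classical x m p' q'"
    unfolding M_classical_def by (intro sum.cong) (auto simp: p'W q'W)
  moreover have "min_eigenvalue \<sigma> = x"
    unfolding x_def \<sigma> by (rule min_eigenvalue_unitary_diag[OF U])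
  ultimately show ?thesis
    using M_quantity_unitary_diag[OF U p(2), where q = q, folded \<rho> \<sigma>]
      M_quantity_unitary_diag[OF V p', where q = q', folded \<rho>' \<sigma>']
    by simp
qed

end
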